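(* Let $p$ be a prime, $\mathbb{C}_p$ the field of complex $p$-adic numbers with norm $|\cdot|_p$, $a,b,c\in\mathbb{C}_p$ with $b\neq0$, $c\neq ab$, and $f(x)=\frac{x+a}{bx+c}$ for $x\neq -c/b$. Fix a square root $\sqrt{(c-1)^2+4ab}\in\mathbb{C}_p$ and let $x_{1}=\frac{1-c+\sqrt{(c-1)^2+4ab}}{2b}$, $x_2=\frac{1-c-\sqrt{(c-1)^2+4ab}}{2b}$ (the fixed points of $f$). Assume $$\left|\frac{c-ab}{(bx_i+c)^2}\right|_p=1\ (i=1,2)\qquad\text{and}\qquad \left|\frac{b}{\sqrt{c-ab}}\right|_p<1,$$ and put $\varepsilon_c=\left|\frac{\sqrt{c-ab}}{b}\right|_p-1$. Then: (i) if $\left|\frac{\sqrt{(c-1)^2+4ab}}{b}\right|_p\ge 1+\varepsilon_c$, then $SI(x_1)\cap SI(x_2)=\emptyset$; (ii) otherwise $SI(x_1)=SI(x_2)$.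
   Context: For $x_0\in\mathbb{C}_p$ and $r>0$: $V_r(x_0)=\{x:|x-x_0|_p<r\}$ and $S_r(x_0)=\{x:|x-x_0|_p=r\}$. For a fixed point $x_0$ of $f$, a ball $V_r(x_0)$ (contained in the domain of $f$) is a Siegel disk if every sphere $S_\rho(x_0)$ with $\rho<r$ is invariant, i.e. for every $x\in S_\rho(x_0)$ all iterates $f^n(x)$ are defined and lie in $S_\rho(x_0)$. The maximum Siegel disk $SI(x_0)$ is the union of all Siegel disks centered at $x_0$. *)

theory Defs
  imports "HOL-Analysis.Analysis" "HOL-Computational_Algebra.Polynomial"
begin

text \<open>Axiomatic characterisation of the complex p-adic numbers C_p: a field of characteristic 0
with a non-archimedean absolute value nrm, normalised by nrm p = 1/p, algebraically closed,
complete, and in which the algebraic numbers (roots of nonzero rational polynomials) are dense.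
These properties determine (C_p, |.|_p) up to isometric isomorphism.\<close>

definition is_Cp :: "nat \<Rightarrow> ('a::field_char_0 \<Rightarrow> real) \<Rightarrow> bool" where
  "is_Cp p nrm \<longleftrightarrow>
     (\<forall>x. nrm x \<ge> 0 \<and> (nrm x = 0 \<longleftrightarrow> x = 0)) \<and>
     (\<forall>x y. nrm (x * y) = nrm x * nrm y) \<and>
     (\<forall>x y. nrm (x + y) \<le> max (nrm x) (nrm y)) \<and>
     nrm (of_nat p) = 1 / real p \<and>
     (\<forall>q :: 'a poly. degree q > 0 \<longrightarrow> (\<exists>x. poly q x = 0)) \<and>
     (\<forall>X :: nat \<Rightarrow> 'a.
        (\<forall>e>0. \<exists>N. \<forall>m\<ge>N. \<forall>n\<ge>N. nrm (X m - X n) < e) \<longrightarrow>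
        (\<exists>L. \<forall>e>0. \<exists>N. \<forall>n\<ge>N. nrm (X n - L) < e)) \<and>
     (\<forall>x. \<forall>e>0. \<exists>y. (\<exists>q :: rat poly. q \<noteq> 0 \<and> poly (map_poly of_rat q) y = 0)
                     \<and> nrm (x - y) < e)"

definition mob :: "'a::field \<Rightarrow> 'a \<Rightarrow> 'a \<Rightarrow> 'a \<Rightarrow> 'a" where
  "mob a b c x = (x + a) / (b * x + c)"

definition Vball :: "('a::ab_group_add \<Rightarrow> real) \<Rightarrow> 'a \<Rightarrow> real \<Rightarrow> 'a set" where
  "Vball nrm x0 r = {x. nrm (x - x0) < r}"

definition Ssphere :: "('a::ab_group_add \<Rightarrow> real) \<Rightarrow> 'a \<Rightarrow> real \<Rightarrow> 'a set" where
  "Ssphere nrm x0 r = {x. nrm (x - x0) = r}"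

definition siegel_disk :: "('a::field \<Rightarrow> real) \<Rightarrow> 'a \<Rightarrow> 'a \<Rightarrow> 'a \<Rightarrow> 'a \<Rightarrow> real \<Rightarrow> bool" where
  "siegel_disk nrm a b c x0 r \<longleftrightarrow>
     r > 0 \<and> (\<forall>x\<in>Vball nrm x0 r. b * x + c \<noteq> 0) \<and>
     (\<forall>\<rho>. 0 < \<rho> \<and> \<rho> < r \<longrightarrow>
        (\<forall>x\<in>Ssphere nrm x0 \<rho>. \<forall>n.
            b * ((mob a b c) ^^ n) x + c \<noteq> 0 \<and> ((mob a b c) ^^ n) x \<in> Ssphere nrm x0 \<rho>))"

definition SI :: "('a::field \<Rightarrow> real) \<Rightarrow> 'a \<Rightarrow> 'a \<Rightarrow> 'a \<Rightarrow> 'a \<Rightarrow> 'a set" where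
  "SI nrm a b c x0 = \<Union>{Vball nrm x0 r | r. siegel_disk nrm a b c x0 r}"

end

theory Submission
  imports Defs
begin

text \<open>Both fixed points are indifferent: the hypotheses say
  \<open>|b x\<^sub>i + c|\<^sup>2 = |c - ab| = |t|\<^sup>2\<close>. On the ball of radius \<open>R = |b x\<^sub>i + c| / |b|\<close> the
  ultrametric inequality keeps \<open>|b y + c|\<close> equal to \<open>|b x\<^sub>i + c|\<close>, so the identity
  \<open>f y - x\<^sub>i = (c - ab)(y - x\<^sub>i) / ((b y + c)(b x\<^sub>i + c))\<close> makes \<open>f\<close> an isometry around \<open>x\<^sub>i\<close>
  there, while the pole \<open>-c/b\<close> lies at distance exactly \<open>R\<close> from \<open>x\<^sub>i\<close>. Hence \<open>SI(x\<^sub>i)\<close> is the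
  open ball of radius \<open>R = |t/b| = 1 + \<epsilon>\<^sub>c\<close> around \<open>x\<^sub>i\<close>, and since \<open>|x\<^sub>1 - x\<^sub>2| = |s/b|\<close>
  and two ultrametric balls of equal radius are either equal or disjoint, the dichotomy
  follows.\<close>

lemma mob_sub_fixed_point:
  fixes a b c :: "'a::field"
  assumes "mob a b c x0 = x0" "b * x0 + c \<noteq> 0" "b * y + c \<noteq> 0"
  shows "mob a b c y - x0 = (c - a * b) * (y - x0) / ((b * y + c) * (b * x0 + c))"
proof -
  have "mob a b c y - x0 = (y + a) / (b * y + c) - (x0 + a) / (b * x0 + c)"
    using assms(1) unfolding mob_def by simp
  also have "\<dots> = ((y + a) * (b * x0 + c) - (x0 + a) * (b * y + c)) / ((b * y + c) * (b * x0 + c))"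
    using assms(2,3) by (simp add: field_simps)
  also have "(y + a) * (b * x0 + c) - (x0 + a) * (b * y + c) = (c - a * b) * (y - x0)"
    by (simp add: algebra_simps)
  finally show ?thesis .
qed

lemma mob_fixed_point_quadratic_root:
  fixes a b c :: "'a::field_char_0"
  assumes "b \<noteq> 0" "s ^ 2 = (c - 1) ^ 2 + 4 * a * b" "b * x + c \<noteq> 0"
    and x: "x = (1 - c + s) / (2 * b)"
  shows "mob a b c x = x"
proof -
  have "b * x * x + (c - 1) * x - a = ((1 - c + s) * (s - (1 - c)) - 4 * a * b) / (4 * b)"
    unfolding x using assms(1) by (simp add: field_simps power2_eq_square)
  also have "(1 - c + s) * (s - (1 - c)) = s ^ 2 - (c - 1) ^ 2"
    by (simp add: algebra_simps power2_eq_square)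
  finally have "b * x * x + (c - 1) * x - a = 0"
    using assms(2) by simp
  then show ?thesis
    using assms(3) unfolding mob_def by (simp add: field_simps)
qed

locale nonarchimedean_abs =
  fixes nrm :: "'a::field \<Rightarrow> real"
  assumes nrm_nonneg: "nrm x \<ge> 0"
    and nrm_eq_0_iff: "nrm x = 0 \<longleftrightarrow> x = 0"
    and nrm_mult: "nrm (x * y) = nrm x * nrm y"
    and nrm_add_le_max: "nrm (x + y) \<le> max (nrm x) (nrm y)"
begin

lemma nrm_one: "nrm 1 = 1"
  using nrm_mult[of 1 1] nrm_eq_0_iff[of 1] by simp

lemma nrm_minus: "nrm (- x) = nrm x"
proof -
  have "nrm (- 1) ^ 2 = 1"
    using nrm_mult[of "- 1" "- 1"] nrm_one by (simp add: power2_eq_square)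
  then have "nrm (- 1) = 1"
    using nrm_nonneg[of "- 1"] by (simp add: power2_eq_1_iff)
  then show ?thesis
    using nrm_mult[of "- 1" x] by simp
qed

lemma nrm_minus_commute: "nrm (x - y) = nrm (y - x)"
  using nrm_minus[of "x - y"] by simp

lemma nrm_divide: "nrm (x / y) = nrm x / nrm y"
proof (cases "y = 0")
  case True
  then show ?thesis using nrm_eq_0_iff[of 0] by simp
next
  case False
  then have "nrm x = nrm (x / y) * nrm y"
    by (metis nrm_mult nonzero_divide_eq_eq)
  then show ?thesis
    using False nrm_eq_0_iff by simp
qed

lemma nrm_power: "nrm (x ^ n) = nrm x ^ n"
  by (induction n) (simp_all add: nrm_one nrm_mult)

lemma nrm_add_eq_if_less: "nrm x < nrm y \<Longrightarrow> nrm (x + y) = nrm y"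
  using nrm_add_le_max[of x y] nrm_add_le_max[of "x + y" "- x"] nrm_minus[of x]
  by (auto simp: max_def split: if_splits)

lemma nrm_diff_le_max: "nrm (x - z) \<le> max (nrm (x - y)) (nrm (y - z))"
  using nrm_add_le_max[of "x - y" "y - z"] by simp

lemma nrm_eq_if_nrm_power2_divide_eq_1:
  assumes "nrm (u ^ 2 / v ^ 2) = 1"
  shows "nrm v = nrm u"
proof -
  have "nrm u ^ 2 / nrm v ^ 2 = 1"
    using assms by (simp only: nrm_divide nrm_power)
  then have "nrm u ^ 2 = nrm v ^ 2"
    by (simp add: divide_eq_1_iff)
  then show ?thesis
    using nrm_nonneg[of u] nrm_nonneg[of v] by (simp add: power2_eq_iff_nonneg)
qed

lemma Vball_subset_if_nrm_diff_less:
  assumes "nrm (x1 - x2) < r"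
  shows "Vball nrm x1 r \<subseteq> Vball nrm x2 r"
proof
  fix x
  assume "x \<in> Vball nrm x1 r"
  then show "x \<in> Vball nrm x2 r"
    using assms nrm_diff_le_max[of x x2 x1] unfolding Vball_def by simp
qed

lemma Vball_eq_if_nrm_diff_less:
  assumes "nrm (x1 - x2) < r"
  shows "Vball nrm x1 r = Vball nrm x2 r"
  using assms Vball_subset_if_nrm_diff_less nrm_minus_commute[of x1 x2]
  by (simp add: subset_antisym)

lemma Vball_disjoint_if_nrm_diff_ge:
  assumes "r \<le> nrm (x1 - x2)"
  shows "Vball nrm x1 r \<inter> Vball nrm x2 r = {}"
proof -
  have False if "nrm (x - x1) < r" "nrm (x - x2) < r" for x
  proof -
    have "nrm (x1 - x2) \<le> max (nrm (x - x1)) (nrm (x - x2))"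
      using nrm_diff_le_max[of x1 x2 x] nrm_minus_commute[of x1 x] by simp
    then show False
      using assms that by simp
  qed
  then show ?thesis
    unfolding Vball_def by blast
qed

lemma nrm_affine_eq_in_ball:
  assumes "nrm (y - x0) < nrm (b * x0 + c) / nrm b"
  shows "nrm (b * y + c) = nrm (b * x0 + c)"
proof -
  have "nrm b \<noteq> 0"
    using assms nrm_nonneg[of "y - x0"] by auto
  then have "nrm (b * (y - x0)) < nrm (b * x0 + c)"
    using assms nrm_nonneg[of b] by (simp add: nrm_mult pos_less_divide_eq mult.commute)
  then have "nrm (b * (y - x0) + (b * x0 + c)) = nrm (b * x0 + c)"
    by (rule nrm_add_eq_if_less)
  then show ?thesis
    by (simp add: algebra_simps)
qed

context
  fixes a b c x0 :: 'a
  assumes fixed: "mob a b c x0 = x0"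
    and pole: "b * x0 + c \<noteq> 0"
    and indifferent: "nrm (c - a * b) = nrm (b * x0 + c) ^ 2"
begin

lemma nrm_mob_sub_fixed_point:
  assumes "nrm (y - x0) < nrm (b * x0 + c) / nrm b"
  shows "nrm (mob a b c y - x0) = nrm (y - x0)"
proof -
  have y: "nrm (b * y + c) = nrm (b * x0 + c)"
    using assms by (rule nrm_affine_eq_in_ball)
  then have "b * y + c \<noteq> 0"
    using pole nrm_eq_0_iff by metis
  then have "mob a b c y - x0 = (c - a * b) * (y - x0) / ((b * y + c) * (b * x0 + c))"
    by (rule mob_sub_fixed_point[OF fixed pole])
  then have "nrm (mob a b c y - x0)
      = nrm (c - a * b) * nrm (y - x0) / (nrm (b * y + c) * nrm (b * x0 + c))"
    by (simp only: nrm_divide nrm_mult)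
  also have "\<dots> = nrm (y - x0)"
    using pole nrm_eq_0_iff[of "b * x0 + c"] by (simp add: y indifferent power2_eq_square)
  finally show ?thesis .
qed

lemma siegel_disk_if_radius_le:
  assumes "0 < r" "r \<le> nrm (b * x0 + c) / nrm b"
  shows "siegel_disk nrm a b c x0 r"
  unfolding siegel_disk_def
proof (intro conjI ballI allI impI)
  show "0 < r" by fact
  have domain: "b * y + c \<noteq> 0" if "nrm (y - x0) < r" for y
  proof -
    have "nrm (b * y + c) = nrm (b * x0 + c)"
      using that assms(2) by (intro nrm_affine_eq_in_ball) simp
    then show ?thesis
      using pole nrm_eq_0_iff by metis
  qed
  then show "b * x + c \<noteq> 0" if "x \<in> Vball nrm x0 r" for x
    using that unfolding Vball_def by simp
  fix \<rho> x n
  assume \<rho>: "0 < \<rho> \<and> \<rho> < r" and x: "x \<in> Ssphere nrm x0 \<rho>"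
  show orbit: "(mob a b c ^^ n) x \<in> Ssphere nrm x0 \<rho>"
  proof (induction n)
    case 0
    then show ?case using x by simp
  next
    case (Suc n)
    then show ?case
      using nrm_mob_sub_fixed_point[of "(mob a b c ^^ n) x"] \<rho> assms(2)
      unfolding Ssphere_def by simp
  qed
  show "b * (mob a b c ^^ n) x + c \<noteq> 0"
    using domain orbit \<rho> unfolding Ssphere_def by simp
qed

end

lemma siegel_disk_radius_le:
  assumes "b \<noteq> 0" "siegel_disk nrm a b c x0 r"
  shows "r \<le> nrm (b * x0 + c) / nrm b"
proof (rule ccontr)
  assume beyond_pole: "\<not> ?thesis"
  have "- c / b - x0 = - (b * x0 + c) / b"
    using assms(1) by (simp add: field_simps)
  then have "nrm (- c / b - x0) = nrm (b * x0 + c) / nrm b"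
    by (simp only: nrm_divide nrm_minus)
  then have "- c / b \<in> Vball nrm x0 r"
    using beyond_pole unfolding Vball_def by simp
  then have "b * (- c / b) + c \<noteq> 0"
    using assms(2) unfolding siegel_disk_def by blast
  then show False
    using assms(1) by simp
qed

lemma SI_eq_Vball:
  assumes "b \<noteq> 0" "mob a b c x0 = x0" "b * x0 + c \<noteq> 0"
    and "nrm (c - a * b) = nrm (b * x0 + c) ^ 2"
  shows "SI nrm a b c x0 = Vball nrm x0 (nrm (b * x0 + c) / nrm b)"
proof -
  define R where "R = nrm (b * x0 + c) / nrm b"
  have "R > 0"
    using assms(1,3) nrm_nonneg nrm_eq_0_iff unfolding R_def by (simp add: order_less_le)
  then have "siegel_disk nrm a b c x0 R"
    using siegel_disk_if_radius_le[OF assms(2-4)] unfolding R_def by simp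
  moreover have "Vball nrm x0 r \<subseteq> Vball nrm x0 R" if "siegel_disk nrm a b c x0 r" for r
    using siegel_disk_radius_le[OF assms(1) that] unfolding R_def Vball_def by auto
  ultimately show ?thesis
    unfolding SI_def R_def[symmetric] by blast
qed

end

lemma SI_quadratic_root_eq_Vball:
  fixes nrm :: "'a::field_char_0 \<Rightarrow> real"
  assumes "nonarchimedean_abs nrm"
    and "b \<noteq> 0" and "s ^ 2 = (c - 1) ^ 2 + 4 * a * b" and x: "x = (1 - c + s) / (2 * b)"
    and "t ^ 2 = c - a * b" "t \<noteq> 0" and "nrm ((c - a * b) / (b * x + c) ^ 2) = 1"
  shows "SI nrm a b c x = Vball nrm x (nrm (t / b))"
proof -
  interpret nonarchimedean_abs nrm by fact
  have T: "nrm (b * x + c) = nrm t"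
    using assms(5,7) nrm_eq_if_nrm_power2_divide_eq_1 by metis
  then have "b * x + c \<noteq> 0"
    using assms(6) nrm_eq_0_iff by metis
  moreover have "mob a b c x = x"
    using mob_fixed_point_quadratic_root[OF assms(2,3) calculation x] .
  moreover have "nrm (c - a * b) = nrm (b * x + c) ^ 2"
    using T assms(5) by (metis nrm_power)
  ultimately show ?thesis
    using SI_eq_Vball[OF assms(2)] T by (simp add: nrm_divide)
qed

lemma is_Cp_imp_nonarchimedean_abs: "is_Cp p nrm \<Longrightarrow> nonarchimedean_abs nrm"
  unfolding is_Cp_def by unfold_locales auto

theorem theorem3p3:
  fixes p :: nat and nrm :: "'a::field_char_0 \<Rightarrow> real"
    and a b c s t x1 x2 :: 'a and eps :: real
  assumes "prime p" and "is_Cp p nrm"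
    and "b \<noteq> 0" and "c \<noteq> a * b"
    and s: "s ^ 2 = (c - 1) ^ 2 + 4 * a * b"
    and t: "t ^ 2 = c - a * b"
    and x1: "x1 = (1 - c + s) / (2 * b)"
    and x2: "x2 = (1 - c - s) / (2 * b)"
    and h1: "nrm ((c - a * b) / (b * x1 + c) ^ 2) = 1"
    and h2: "nrm ((c - a * b) / (b * x2 + c) ^ 2) = 1"
    and h3: "nrm (b / t) < 1"
    and eps: "eps = nrm (t / b) - 1"
  shows "(nrm (s / b) \<ge> 1 + eps \<longrightarrow> SI nrm a b c x1 \<inter> SI nrm a b c x2 = {})
       \<and> (\<not> nrm (s / b) \<ge> 1 + eps \<longrightarrow> SI nrm a b c x1 = SI nrm a b c x2)"
proof -
  have nonarch: "nonarchimedean_abs nrm"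
    using assms(2) by (rule is_Cp_imp_nonarchimedean_abs)
  interpret nonarchimedean_abs nrm by (fact nonarch)
  have "t \<noteq> 0"
    using t assms(4) by auto
  note SI_eq = SI_quadratic_root_eq_Vball[OF nonarch assms(3) _ _ t \<open>t \<noteq> 0\<close>]
  have "SI nrm a b c x1 = Vball nrm x1 (1 + eps)"
    using SI_eq[OF s x1 h1] eps by simp
  moreover have "SI nrm a b c x2 = Vball nrm x2 (1 + eps)"
    using SI_eq[of "- s", OF _ _ h2] x2 s eps by simp
  moreover have "x1 - x2 = s / b"
    unfolding x1 x2 using assms(3) by (simp add: field_simps)
  ultimately show ?thesis
    using Vball_disjoint_if_nrm_diff_ge Vball_eq_if_nrm_diff_less by auto
qed

end
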